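(* Let $0<r_j<\infty$ and $0<s_j<\infty$ for $j=1,\dots,n$, let $\rho=\otimes_{j=1}^n\gamma(r_j)$ and $\sigma=\otimes_{j=1}^n\gamma(s_j)$. Let $\alpha>1$ and let $V_{\sigma(\alpha-1)}$ and $V_{\rho(\alpha)}$ denote the covariance matrices of the gaussian states $\sigma^{\alpha-1}/\operatorname{tr}\sigma^{\alpha-1}$ and $\rho^\alpha/\operatorname{tr}\rho^\alpha$ respectively. Then $D_\alpha(\rho\|\sigma)<\infty\iff V_{\sigma(\alpha-1)}>V_{\rho(\alpha)}$.
   Context: One-mode Fock space: $\ell^2(\mathbb{Z}_{\ge 0})$ with orthonormal particle basis $\{|k\rangle\}$; $n$-mode space is the $n$-fold tensor product. For $0<s<\infty$, $\gamma(s)=(1-e^{-s})\sum_{k\ge0}e^{-ks}|k\rangle\langle k|$. For $\beta>0$, $\gamma(\mathbf{s})^\beta/\operatorname{tr}\gamma(\mathbf{s})^\beta=\otimes_j\gamma(\beta s_j)$, and the covariance matrix of $\otimes_j\gamma(t_j)$ is $\frac12\operatorname{diag}(\coth\frac{t_1}{2},\dots,\coth\frac{t_n}{2})\otimes I_2$. $A>B$ means $A-B$ is positive definite. For states $\rho=\sum_i p_i|x_i\rangle\langle x_i|$, $\sigma=\sum_j q_j|y_j\rangle\langle y_j|$ (spectral decompositions), $D_\alpha(\rho\|\sigma)=\frac{1}{\alpha-1}\log\sum_{i,j}p_i^\alpha q_j^{1-\alpha}|\langle x_i|y_j\rangle|^2$. *)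

theory Defs
  imports "HOL-Analysis.Analysis"
begin

definition coth :: "real \<Rightarrow> real" where
  "coth x = cosh x / sinh x"

text \<open>Particle-number basis of the n-mode Fock space: multi-indices
  k = (k_0,...,k_{n-1}) in Z_{>=0}^n, encoded as functions nat => nat vanishing
  outside {..<n}.\<close>
definition fock_basis :: "nat \<Rightarrow> (nat \<Rightarrow> nat) set" where
  "fock_basis n = {k. \<forall>j. n \<le> j \<longrightarrow> k j = 0}"

text \<open>Squared overlap |<k|l>|^2 of two particle-basis vectors (orthonormal basis).\<close>
definition fock_overlap :: "(nat \<Rightarrow> nat) \<Rightarrow> (nat \<Rightarrow> nat) \<Rightarrow> real" where
  "fock_overlap k l = (if k = l then 1 else 0)"

text \<open>Eigenvalue of the product thermal state (x)_j gamma(s_j) on the basis vector |k>: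
  gamma(s) = (1 - e^{-s}) sum_k e^{-k s} |k><k|.\<close>
definition thermal_eig :: "nat \<Rightarrow> (nat \<Rightarrow> real) \<Rightarrow> (nat \<Rightarrow> nat) \<Rightarrow> real" where
  "thermal_eig n s k = (\<Prod>j<n. (1 - exp (- s j)) * exp (- real (k j) * s j))"

text \<open>Petz Renyi divergence from spectral decompositions
  rho = sum_{i in I} p i |x_i><x_i|, sigma = sum_{j in J} q j |y_j><y_j|,
  where ov i j = |<x_i|y_j>|^2:
  D_alpha = 1/(alpha-1) log sum_{i,j} p_i^alpha q_j^(1-alpha) |<x_i|y_j>|^2,
  valued in the extended reals (= +infinity when the nonnegative series diverges).\<close>
definition renyi_div ::
  "real \<Rightarrow> 'i set \<Rightarrow> ('i \<Rightarrow> real) \<Rightarrow> 'j set \<Rightarrow> ('j \<Rightarrow> real) \<Rightarrow> ('i \<Rightarrow> 'j \<Rightarrow> real) \<Rightarrow> ereal"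
where
  "renyi_div \<alpha> I p J q ov =
     (let S = (\<integral>\<^sup>+ ij. ennreal (p (fst ij) powr \<alpha> * q (snd ij) powr (1 - \<alpha>) * ov (fst ij) (snd ij))
                 \<partial>count_space (I \<times> J))
      in if S = \<infinity> then \<infinity> else ereal (ln (enn2real S) / (\<alpha> - 1)))"

text \<open>Renyi divergence of two n-mode product thermal states rho = (x)_j gamma(r_j),
  sigma = (x)_j gamma(s_j), both spectrally decomposed in the particle basis.\<close>
definition thermal_renyi :: "real \<Rightarrow> nat \<Rightarrow> (nat \<Rightarrow> real) \<Rightarrow> (nat \<Rightarrow> real) \<Rightarrow> ereal" where
  "thermal_renyi \<alpha> n r s =
     renyi_div \<alpha> (fock_basis n) (thermal_eig n r) (fock_basis n) (thermal_eig n s) fock_overlap"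

text \<open>Covariance matrix of (x)_j gamma(t_j): (1/2) diag(coth(t_1/2),...,coth(t_n/2)) (x) I_2,
  a 2n x 2n real matrix, indices 0..2n-1, row/column (j,a) <-> 2j+a.\<close>
definition thermal_cov :: "(nat \<Rightarrow> real) \<Rightarrow> nat \<Rightarrow> nat \<Rightarrow> real" where
  "thermal_cov t a b = (if a = b then coth (t (a div 2) / 2) / 2 else 0)"

definition pos_def :: "nat \<Rightarrow> (nat \<Rightarrow> nat \<Rightarrow> real) \<Rightarrow> bool" where
  "pos_def m M \<longleftrightarrow> (\<forall>x :: nat \<Rightarrow> real. (\<exists>i<m. x i \<noteq> 0) \<longrightarrow>
      (\<Sum>i<m. \<Sum>j<m. x i * M i j * x j) > 0)"

definition mat_gt :: "nat \<Rightarrow> (nat \<Rightarrow> nat \<Rightarrow> real) \<Rightarrow> (nat \<Rightarrow> nat \<Rightarrow> real) \<Rightarrow> bool" where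
  "mat_gt m A B \<longleftrightarrow> pos_def m (\<lambda>i j. A i j - B i j)"

end

theory Submission
  imports Defs
begin

(* Both sides decouple into the n modes.  The Petz sum is diagonal in the particle basis and
   factorises into a product of geometric series, the j-th with ratio exp (-t_j) where
   t_j = alpha r_j - (alpha - 1) s_j; it is finite iff every t_j > 0.  The difference of the
   covariance matrices is diagonal with entries (coth ((alpha - 1) s_j / 2) - coth (alpha r_j / 2)) / 2,
   which are positive iff (alpha - 1) s_j < alpha r_j, because coth decreases on (0, infinity). *)

lemma countable_fock_basis: "countable (fock_basis n)"
proof (rule countable_subset)
  show "fock_basis n \<subseteq> range (\<lambda>xs :: nat list. \<lambda>j. if j < length xs then xs ! j else 0)"
  proof
    fix k assume "k \<in> fock_basis n"
    then have "k = (\<lambda>j. if j < length (map k [0..<n]) then map k [0..<n] ! j else 0)"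
      by (auto simp: fock_basis_def fun_eq_iff not_less)
    then show "k \<in> range (\<lambda>xs :: nat list. \<lambda>j. if j < length xs then xs ! j else 0)"
      by blast
  qed
qed simp

lemma bij_betw_fock_basis_Suc:
  "bij_betw (\<lambda>(k, m). k(n := m)) (fock_basis n \<times> UNIV) (fock_basis (Suc n))"
  by (rule bij_betwI[where g = "\<lambda>k. (k(n := 0), k n)"])
     (auto simp: fock_basis_def fun_eq_iff Suc_le_eq)

lemma nn_integral_count_space_times:
  fixes f :: "'a \<Rightarrow> ennreal" and g :: "'b \<Rightarrow> ennreal"
  assumes "countable A" "countable B"
  shows "(\<integral>\<^sup>+x. f (fst x) * g (snd x) \<partial>count_space (A \<times> B)) =
         (\<integral>\<^sup>+a. f a \<partial>count_space A) * (\<integral>\<^sup>+b. g b \<partial>count_space B)"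
proof -
  interpret sigma_finite_measure "count_space B"
    using assms(2) by (rule sigma_finite_measure_count_space_countable)
  have "(\<integral>\<^sup>+x. f (fst x) * g (snd x) \<partial>count_space (A \<times> B)) =
        (\<integral>\<^sup>+a. \<integral>\<^sup>+b. f a * g b \<partial>count_space B \<partial>count_space A)"
    using nn_integral_fst[of "\<lambda>x. f (fst x) * g (snd x)" "count_space A"]
    by (simp add: pair_measure_countable assms)
  also have "\<dots> = (\<integral>\<^sup>+a. f a * (\<integral>\<^sup>+b. g b \<partial>count_space B) \<partial>count_space A)"
    by (simp add: nn_integral_cmult)
  finally show ?thesis
    by (simp add: nn_integral_multc)
qed

lemma nn_integral_fock_basis_prod:
  fixes G :: "nat \<Rightarrow> nat \<Rightarrow> ennreal"
  shows "(\<integral>\<^sup>+k. (\<Prod>j<n. G j (k j)) \<partial>count_space (fock_basis n)) =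
         (\<Prod>j<n. \<integral>\<^sup>+m. G j m \<partial>count_space UNIV)"
proof (induction n)
  case 0
  have "fock_basis 0 = {\<lambda>_. 0}"
    by (auto simp: fock_basis_def)
  then show ?case
    by (simp add: nn_integral_count_space_finite)
next
  case (Suc n)
  have split_last: "(\<Prod>j<Suc n. G j ((k(n := m)) j)) = (\<Prod>j<n. G j (k j)) * G n m" for k m
  proof -
    have "(\<Prod>j<n. G j ((k(n := m)) j)) = (\<Prod>j<n. G j (k j))"
      by (intro prod.cong) auto
    then show ?thesis
      by (simp add: lessThan_Suc mult.commute)
  qed
  have "(\<integral>\<^sup>+k. (\<Prod>j<Suc n. G j (k j)) \<partial>count_space (fock_basis (Suc n))) =
        (\<integral>\<^sup>+x. (\<Prod>j<n. G j (fst x j)) * G n (snd x) \<partial>count_space (fock_basis n \<times> UNIV))"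
    by (simp add: nn_integral_bij_count_space[OF bij_betw_fock_basis_Suc, symmetric]
        split_def split_last)
  also have "\<dots> = (\<integral>\<^sup>+k. (\<Prod>j<n. G j (k j)) \<partial>count_space (fock_basis n)) *
                  (\<integral>\<^sup>+m. G n m \<partial>count_space UNIV)"
    by (rule nn_integral_count_space_times[OF countable_fock_basis]) simp
  finally show ?case
    by (simp add: Suc)
qed

lemma nn_integral_fock_overlap:
  fixes h :: "(nat \<Rightarrow> nat) \<times> (nat \<Rightarrow> nat) \<Rightarrow> real"
  shows "(\<integral>\<^sup>+kl. ennreal (h kl * fock_overlap (fst kl) (snd kl)) \<partial>count_space (F \<times> F)) =
         (\<integral>\<^sup>+k. ennreal (h (k, k)) \<partial>count_space F)"
proof -
  let ?D = "(\<lambda>k. (k, k)) ` F"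
  have "(\<integral>\<^sup>+kl. ennreal (h kl * fock_overlap (fst kl) (snd kl)) \<partial>count_space (F \<times> F)) =
        (\<integral>\<^sup>+kl. ennreal (h kl) * indicator ?D kl \<partial>count_space UNIV)"
    by (subst nn_integral_count_space_indicator)
       (auto intro!: nn_integral_cong simp: fock_overlap_def indicator_def)
  also have "\<dots> = (\<integral>\<^sup>+kl. ennreal (h kl) \<partial>count_space ?D)"
    by (simp add: nn_integral_count_space_indicator)
  also have "\<dots> = (\<integral>\<^sup>+k. ennreal (h (k, k)) \<partial>count_space F)"
    by (rule nn_integral_bij_count_space[symmetric]) (auto intro: bij_betw_imageI inj_onI)
  finally show ?thesis .
qed

lemma nn_integral_geometric_neq_zero:
  fixes a x :: real
  assumes "0 < a"
  shows "(\<integral>\<^sup>+m. ennreal (a * x ^ m) \<partial>count_space UNIV) \<noteq> 0"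
  using assms by (auto simp: nn_integral_0_iff_AE AE_count_space intro!: exI[of _ 0])

lemma nn_integral_geometric_eq_top_iff:
  fixes a x :: real
  assumes "0 < a" "0 \<le> x"
  shows "(\<integral>\<^sup>+m. ennreal (a * x ^ m) \<partial>count_space UNIV) = \<infinity> \<longleftrightarrow> 1 \<le> x"
proof
  assume "1 \<le> x"
  have "\<infinity> = (\<integral>\<^sup>+m. ennreal a \<partial>count_space (UNIV :: nat set))"
    using assms by (simp add: ennreal_mult_top)
  also have "\<dots> \<le> (\<integral>\<^sup>+m. ennreal (a * x ^ m) \<partial>count_space UNIV)"
    using assms \<open>1 \<le> x\<close> by (intro nn_integral_mono ennreal_leI) (simp add: one_le_power)
  finally show "(\<integral>\<^sup>+m. ennreal (a * x ^ m) \<partial>count_space UNIV) = \<infinity>"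
    by (simp add: top_unique)
next
  assume infinite: "(\<integral>\<^sup>+m. ennreal (a * x ^ m) \<partial>count_space UNIV) = \<infinity>"
  show "1 \<le> x"
  proof (rule ccontr)
    assume "\<not> 1 \<le> x"
    then have "summable (\<lambda>m. a * x ^ m)"
      using assms by (intro summable_mult summable_geometric) simp
    then have "(\<integral>\<^sup>+m. ennreal (a * x ^ m) \<partial>count_space UNIV) = ennreal (\<Sum>m. a * x ^ m)"
      using assms by (simp add: nn_integral_count_space_nat suminf_ennreal2)
    with infinite show False
      by simp
  qed
qed

lemma renyi_div_less_top_iff:
  "renyi_div \<alpha> I p J q ov < \<infinity> \<longleftrightarrow>
   (\<integral>\<^sup>+ij. ennreal (p (fst ij) powr \<alpha> * q (snd ij) powr (1 - \<alpha>) * ov (fst ij) (snd ij))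
      \<partial>count_space (I \<times> J)) \<noteq> \<infinity>"
  by (simp add: renyi_div_def Let_def)

lemma thermal_eig_powr_mult:
  "thermal_eig n r k powr \<alpha> * thermal_eig n s k powr (1 - \<alpha>) =
   (\<Prod>j<n. ((1 - exp (- r j)) powr \<alpha> * (1 - exp (- s j)) powr (1 - \<alpha>)) *
           exp (- (\<alpha> * r j - (\<alpha> - 1) * s j)) ^ k j)"
  unfolding thermal_eig_def prod_powr_distrib prod.distrib[symmetric]
proof (rule prod.cong[OF refl])
  fix j
  have "exp (- real (k j) * r j) powr \<alpha> * exp (- real (k j) * s j) powr (1 - \<alpha>) =
        exp (- (\<alpha> * r j - (\<alpha> - 1) * s j)) ^ k j"
    by (simp add: exp_powr_real exp_add[symmetric] exp_of_nat_mult[symmetric] algebra_simps)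
  then show "((1 - exp (- r j)) * exp (- real (k j) * r j)) powr \<alpha> *
             ((1 - exp (- s j)) * exp (- real (k j) * s j)) powr (1 - \<alpha>) =
             ((1 - exp (- r j)) powr \<alpha> * (1 - exp (- s j)) powr (1 - \<alpha>)) *
             exp (- (\<alpha> * r j - (\<alpha> - 1) * s j)) ^ k j"
    by (simp add: powr_mult)
qed

lemma thermal_renyi_less_top_iff:
  assumes "\<And>j. j < n \<Longrightarrow> 0 < r j" and "\<And>j. j < n \<Longrightarrow> 0 < s j"
  shows "thermal_renyi \<alpha> n r s < \<infinity> \<longleftrightarrow> (\<forall>j<n. (\<alpha> - 1) * s j < \<alpha> * r j)"
proof -
  define c where "c j = (1 - exp (- r j)) powr \<alpha> * (1 - exp (- s j)) powr (1 - \<alpha>)" for j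
  define x where "x j = exp (- (\<alpha> * r j - (\<alpha> - 1) * s j))" for j
  define I where "I j = (\<integral>\<^sup>+m. ennreal (c j * x j ^ m) \<partial>count_space UNIV)" for j
  have c_pos: "0 < c j" if "j < n" for j
    using assms[OF that] by (simp add: c_def)
  have "thermal_renyi \<alpha> n r s < \<infinity> \<longleftrightarrow>
        (\<integral>\<^sup>+k. ennreal (\<Prod>j<n. c j * x j ^ k j) \<partial>count_space (fock_basis n)) \<noteq> \<infinity>"
    unfolding thermal_renyi_def renyi_div_less_top_iff
    by (subst nn_integral_fock_overlap[where h = "\<lambda>kl. thermal_eig n r (fst kl) powr \<alpha> *
        thermal_eig n s (snd kl) powr (1 - \<alpha>)", simplified])
       (simp add: thermal_eig_powr_mult c_def x_def)
  also have "(\<integral>\<^sup>+k. ennreal (\<Prod>j<n. c j * x j ^ k j) \<partial>count_space (fock_basis n)) = (\<Prod>j<n. I j)"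
  proof -
    have "ennreal (\<Prod>j<n. c j * x j ^ k j) = (\<Prod>j<n. ennreal (c j * x j ^ k j))" for k
      by (rule prod_ennreal[symmetric]) (simp add: c_def x_def)
    then show ?thesis
      using nn_integral_fock_basis_prod[of n "\<lambda>j m. ennreal (c j * x j ^ m)"] by (simp add: I_def)
  qed
  also have "(\<Prod>j<n. I j) \<noteq> \<infinity> \<longleftrightarrow> (\<forall>j<n. x j < 1)"
  proof -
    have "I j \<noteq> 0" "I j = \<infinity> \<longleftrightarrow> \<not> x j < 1" if "j < n" for j
      using c_pos[OF that] nn_integral_geometric_eq_top_iff[of "c j" "x j"]
      by (simp_all add: I_def x_def nn_integral_geometric_neq_zero not_less)
    then show ?thesis
      by (auto simp: ennreal_prod_eq_top)
  qed
  also have "\<dots> \<longleftrightarrow> (\<forall>j<n. (\<alpha> - 1) * s j < \<alpha> * r j)"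
    by (simp add: x_def)
  finally show ?thesis .
qed

lemma coth_strict_antimono:
  assumes "0 < a" "a < b"
  shows "coth b < coth a"
proof -
  have sinh_pos: "0 < sinh a" "0 < sinh b"
    using assms by auto
  have "0 < sinh (b - a)"
    using assms by simp
  then have "cosh b * sinh a < cosh a * sinh b"
    by (simp add: sinh_diff algebra_simps)
  then show ?thesis
    using sinh_pos by (simp add: coth_def divide_simps mult.commute)
qed

lemma coth_less_coth_iff:
  assumes "0 < a" "0 < b"
  shows "coth b < coth a \<longleftrightarrow> a < b"
  using coth_strict_antimono[of a b] coth_strict_antimono[of b a] assms
  by (cases a b rule: linorder_cases) auto

lemma pos_def_diag_iff:
  "pos_def m (\<lambda>i j. if i = j then D i else 0) \<longleftrightarrow> (\<forall>i<m. 0 < D i)"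
proof -
  have quadratic_form: "(\<Sum>i<m. \<Sum>j<m. x i * (if i = j then D i else 0) * x j) = (\<Sum>i<m. D i * (x i)\<^sup>2)"
    for x
    by (simp add: if_distrib if_distribR power2_eq_square mult_ac cong: if_cong)
  show ?thesis
  proof
    assume pd: "pos_def m (\<lambda>i j. if i = j then D i else 0)"
    show "\<forall>i<m. 0 < D i"
    proof (intro allI impI)
      fix i assume "i < m"
      then have "0 < (\<Sum>k<m. D k * (if k = i then 1 else 0)\<^sup>2)"
        using pd[unfolded pos_def_def quadratic_form, rule_format, of "\<lambda>k. if k = i then 1 else 0"]
        by auto
      also have "\<dots> = (\<Sum>k<m. if k = i then D k else 0)"
        by (intro sum.cong) auto
      finally show "0 < D i"
        using \<open>i < m\<close> by simp
    qed
  next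
    assume D_pos: "\<forall>i<m. 0 < D i"
    show "pos_def m (\<lambda>i j. if i = j then D i else 0)"
      unfolding pos_def_def quadratic_form
    proof (intro allI impI)
      fix x :: "nat \<Rightarrow> real"
      assume "\<exists>i<m. x i \<noteq> 0"
      then obtain i where "i < m" "x i \<noteq> 0"
        by blast
      then show "0 < (\<Sum>i<m. D i * (x i)\<^sup>2)"
        using D_pos by (intro sum_pos2[of _ i]) auto
    qed
  qed
qed

lemma mat_gt_thermal_cov_iff:
  assumes "\<And>j. j < n \<Longrightarrow> 0 < u j" and "\<And>j. j < n \<Longrightarrow> 0 < v j"
  shows "mat_gt (2 * n) (thermal_cov u) (thermal_cov v) \<longleftrightarrow> (\<forall>j<n. u j < v j)"
proof -
  define E where "E j = coth (u j / 2) / 2 - coth (v j / 2) / 2" for j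
  have "(\<lambda>i j. thermal_cov u i j - thermal_cov v i j) = (\<lambda>i j. if i = j then E (i div 2) else 0)"
    by (simp add: fun_eq_iff thermal_cov_def E_def)
  then have "mat_gt (2 * n) (thermal_cov u) (thermal_cov v) \<longleftrightarrow> (\<forall>i<2 * n. 0 < E (i div 2))"
    by (simp add: mat_gt_def pos_def_diag_iff)
  also have "\<dots> \<longleftrightarrow> (\<forall>j<n. 0 < E j)"
  proof
    assume "\<forall>i<2 * n. 0 < E (i div 2)"
    then show "\<forall>j<n. 0 < E j"
      by (metis mult_less_cancel1 nonzero_mult_div_cancel_left zero_less_numeral zero_neq_numeral)
  next
    assume "\<forall>j<n. 0 < E j"
    then show "\<forall>i<2 * n. 0 < E (i div 2)"
      by (simp add: less_mult_imp_div_less mult.commute)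
  qed
  also have "\<dots> \<longleftrightarrow> (\<forall>j<n. u j < v j)"
    using assms by (auto simp: E_def coth_less_coth_iff)
  finally show ?thesis .
qed

theorem proposition3p6:
  fixes n :: nat and r s :: "nat \<Rightarrow> real" and \<alpha> :: real
  assumes "\<And>j. j < n \<Longrightarrow> 0 < r j"
      and "\<And>j. j < n \<Longrightarrow> 0 < s j"
      and "1 < \<alpha>"
  shows "thermal_renyi \<alpha> n r s < \<infinity> \<longleftrightarrow>
         mat_gt (2 * n) (thermal_cov (\<lambda>j. (\<alpha> - 1) * s j)) (thermal_cov (\<lambda>j. \<alpha> * r j))"
proof -
  have "0 < (\<alpha> - 1) * s j" "0 < \<alpha> * r j" if "j < n" for j
    using assms that by simp_all
  then have "mat_gt (2 * n) (thermal_cov (\<lambda>j. (\<alpha> - 1) * s j)) (thermal_cov (\<lambda>j. \<alpha> * r j)) \<longleftrightarrow>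
             (\<forall>j<n. (\<alpha> - 1) * s j < \<alpha> * r j)"
    by (rule mat_gt_thermal_cov_iff)
  moreover have "thermal_renyi \<alpha> n r s < \<infinity> \<longleftrightarrow> (\<forall>j<n. (\<alpha> - 1) * s j < \<alpha> * r j)"
    using assms(1,2) by (rule thermal_renyi_less_top_iff)
  ultimately show ?thesis
    by blast
qed

end
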